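(* Under the standing setup, the difference in group means satisfies $$D=\frac{\delta_B+\delta_W}{(1-\gamma)\,\mathrm{Var}(X)} .$$ (In particular $0\le\gamma<1$, and $D$ has the same sign as $\delta_B+\delta_W$.)
   Context: Let $(X,Y,N)$ be a random triple with $X\in\{0,1\}$ (group membership), $Y$ a real-valued outcome, and $N$ taking values in a finite set $\mathcal N$ (neighborhoods). Write $p_n=\Pr(N=n)$, $X_n=\mathbb E[X\mid N=n]$, $Y_n=\mathbb E[Y\mid N=n]$, and let $X_N=\mathbb E[X\mid N]$, $Y_N=\mathbb E[Y\mid N]$ denote the corresponding random variables. Assume there exists $n\in\mathcal N$ with $p_n>0$ and $X_n\in(0,1)$. Fix reals $\underline Y\le\overline Y$ and assume $Y_n^x:=\mathbb E[Y\mid X=x,N=n]\in[\underline Y,\overline Y]$ whenever $\Pr(X=x,N=n)>0$. Group means: $Y^x=\mathbb E[Y\mid X=x]$ for $x\in\{0,1\}$, and $D=Y^1-Y^0$. Between-group association: $\delta_B=\mathbb E[\mathrm{Cov}(Y,X\mid N)]$. Within-group association: $\delta_W=\mathbb E[\mathrm{Cov}(Y,X_N\mid X)]$. Aggregation ratio: $\gamma=\mathrm{Var}(X_N)/\mathrm{Var}(X)$. *)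

theory Defs
  imports "HOL-Probability.Probability"
begin

text \<open>Elementary conditional mean of f on an event A: E[f | A] = E[f 1_A] / P(A)
  (equal to 0 when P(A) = 0; such values are always multiplied by P(A) or excluded).\<close>
definition cmean :: "'a measure \<Rightarrow> ('a \<Rightarrow> real) \<Rightarrow> 'a set \<Rightarrow> real" where
  "cmean M f A = (\<integral>\<omega>. indicator A \<omega> * f \<omega> \<partial>M) / measure M A"

definition var :: "'a measure \<Rightarrow> ('a \<Rightarrow> real) \<Rightarrow> real" where
  "var M f = (\<integral>\<omega>. (f \<omega> - (\<integral>\<eta>. f \<eta> \<partial>M))\<^sup>2 \<partial>M)"

definition evN :: "'a measure \<Rightarrow> ('a \<Rightarrow> 'n) \<Rightarrow> 'n \<Rightarrow> 'a set" where
  "evN M N n = N -` {n} \<inter> space M"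

definition evX :: "'a measure \<Rightarrow> ('a \<Rightarrow> real) \<Rightarrow> real \<Rightarrow> 'a set" where
  "evX M X x = X -` {x} \<inter> space M"

definition XN :: "'a measure \<Rightarrow> ('a \<Rightarrow> real) \<Rightarrow> ('a \<Rightarrow> 'n) \<Rightarrow> 'a \<Rightarrow> real" where
  "XN M X N \<omega> = cmean M X (evN M N (N \<omega>))"

definition deltaB :: "'a measure \<Rightarrow> ('a \<Rightarrow> real) \<Rightarrow> ('a \<Rightarrow> real) \<Rightarrow> ('a \<Rightarrow> 'n::finite) \<Rightarrow> real" where
  "deltaB M X Y N = (\<Sum>n\<in>UNIV. measure M (evN M N n) *
     (cmean M (\<lambda>\<omega>. Y \<omega> * X \<omega>) (evN M N n) - cmean M Y (evN M N n) * cmean M X (evN M N n)))"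

definition deltaW :: "'a measure \<Rightarrow> ('a \<Rightarrow> real) \<Rightarrow> ('a \<Rightarrow> real) \<Rightarrow> ('a \<Rightarrow> 'n::finite) \<Rightarrow> real" where
  "deltaW M X Y N = (\<Sum>x\<in>{0,1}. measure M (evX M X x) *
     (cmean M (\<lambda>\<omega>. Y \<omega> * XN M X N \<omega>) (evX M X x)
      - cmean M Y (evX M X x) * cmean M (XN M X N) (evX M X x)))"

definition gammaAgg :: "'a measure \<Rightarrow> ('a \<Rightarrow> real) \<Rightarrow> ('a \<Rightarrow> 'n) \<Rightarrow> real" where
  "gammaAgg M X N = var M (XN M X N) / var M X"

definition Dgap :: "'a measure \<Rightarrow> ('a \<Rightarrow> real) \<Rightarrow> ('a \<Rightarrow> real) \<Rightarrow> real" where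
  "Dgap M X Y = cmean M Y (evX M X 1) - cmean M Y (evX M X 0)"

end

theory Submission
  imports Defs
begin

text \<open>Write \<open>\<mu> = E[X]\<close> and \<open>q = E[X X\<^sub>N]\<close>; by the tower property over the finite
  partition generated by \<open>N\<close>, \<open>E[X\<^sub>N] = \<mu>\<close> and \<open>E[X\<^sub>N\<^sup>2] = q\<close>. Expanding the conditional
  covariances gives \<open>\<delta>\<^sub>B = E[XY] - E[Y X\<^sub>N]\<close> and
  \<open>\<delta>\<^sub>W = E[Y X\<^sub>N] - E[XY] q/\<mu> - E[(1-X)Y] (\<mu>-q)/(1-\<mu>)\<close>, so \<open>\<delta>\<^sub>B + \<delta>\<^sub>W = (\<mu> - q) D\<close>.
  Since \<open>X\<close> is binary, \<open>Var X = \<mu> - \<mu>\<^sup>2\<close> and \<open>Var X\<^sub>N = q - \<mu>\<^sup>2\<close>, hence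
  \<open>(1 - \<gamma>) Var X = \<mu> - q = E[X\<^sub>N (1 - X\<^sub>N)]\<close>, the mean within-neighbourhood variance, which is
  positive because some neighbourhood of positive mass is mixed.\<close>

lemma integrable_mult_bounded:
  fixes f g :: "'a \<Rightarrow> real"
  assumes f: "integrable M f" and g: "g \<in> borel_measurable M"
    and bound: "\<forall>\<omega>\<in>space M. \<bar>g \<omega>\<bar> \<le> B"
  shows "integrable M (\<lambda>\<omega>. f \<omega> * g \<omega>)"
proof (rule Bochner_Integration.integrable_bound[where f="\<lambda>\<omega>. B * f \<omega>"])
  show "integrable M (\<lambda>\<omega>. B * f \<omega>)" using f by simp
  show "(\<lambda>\<omega>. f \<omega> * g \<omega>) \<in> borel_measurable M"
    using borel_measurable_integrable[OF f] g by measurable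
  show "AE \<omega> in M. norm (f \<omega> * g \<omega>) \<le> norm (B * f \<omega>)"
  proof (rule AE_I2)
    fix \<omega> assume "\<omega> \<in> space M"
    with bound have g_le: "\<bar>g \<omega>\<bar> \<le> B" by blast
    then have "\<bar>B\<bar> = B" by linarith
    with mult_left_mono[OF g_le abs_ge_zero[of "f \<omega>"]]
    show "norm (f \<omega> * g \<omega>) \<le> norm (B * f \<omega>)"
      by (simp add: abs_mult mult.commute[of B])
  qed
qed

lemma (in finite_measure) measure_mult_cmean:
  assumes A: "A \<in> sets M" and f: "integrable M f"
  shows "measure M A * cmean M f A = (\<integral>\<omega>. indicator A \<omega> * f \<omega> \<partial>M)"
proof (cases "measure M A = 0")
  case True
  with A have "A \<in> null_sets M"
    by (simp add: null_sets_def emeasure_eq_measure)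
  then have "AE \<omega> in M. indicator A \<omega> * f \<omega> = 0"
    by (rule AE_mp[OF AE_not_in]) simp
  then have "(\<integral>\<omega>. indicator A \<omega> * f \<omega> \<partial>M) = 0"
    by (rule integral_eq_zero_AE)
  with True show ?thesis by simp
qed (simp add: cmean_def)

lemma (in finite_measure) measure_mult_cmean_cov:
  assumes A: "A \<in> sets M" and f: "integrable M f" and fg: "integrable M (\<lambda>\<omega>. f \<omega> * g \<omega>)"
  shows "measure M A * (cmean M (\<lambda>\<omega>. f \<omega> * g \<omega>) A - cmean M f A * cmean M g A)
    = (\<integral>\<omega>. indicator A \<omega> * (f \<omega> * g \<omega>) \<partial>M)
      - (\<integral>\<omega>. indicator A \<omega> * f \<omega> \<partial>M) * (\<integral>\<omega>. indicator A \<omega> * g \<omega> \<partial>M) / measure M A"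
  using measure_mult_cmean[OF A f] measure_mult_cmean[OF A fg]
  by (simp add: right_diff_distrib cmean_def[of M g] flip: mult.assoc)

lemma sets_evN: "N \<in> M \<rightarrow>\<^sub>M count_space UNIV \<Longrightarrow> evN M N n \<in> sets M"
  unfolding evN_def by (auto intro: measurable_sets)

lemma sets_evX: "X \<in> borel_measurable M \<Longrightarrow> evX M X x \<in> sets M"
  unfolding evX_def by (auto intro: measurable_sets)

lemma integral_mult_comp_eq_sum:
  fixes N :: "'a \<Rightarrow> 'n::finite" and f :: "'a \<Rightarrow> real"
  assumes f: "integrable M f" and N: "N \<in> M \<rightarrow>\<^sub>M count_space UNIV"
  shows "(\<integral>\<omega>. f \<omega> * h (N \<omega>) \<partial>M) = (\<Sum>n\<in>UNIV. h n * (\<integral>\<omega>. indicator (evN M N n) \<omega> * f \<omega> \<partial>M))"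
proof -
  have "(\<integral>\<omega>. f \<omega> * h (N \<omega>) \<partial>M) = (\<integral>\<omega>. (\<Sum>n\<in>UNIV. h n * (indicator (evN M N n) \<omega> * f \<omega>)) \<partial>M)"
  proof (intro Bochner_Integration.integral_cong refl)
    fix \<omega> assume "\<omega> \<in> space M"
    then have "(\<Sum>n\<in>UNIV. h n * (indicator (evN M N n) \<omega> * f \<omega>))
        = (\<Sum>n\<in>UNIV. if n = N \<omega> then h n * f \<omega> else 0)"
      by (intro sum.cong) (auto simp: evN_def)
    then show "f \<omega> * h (N \<omega>) = (\<Sum>n\<in>UNIV. h n * (indicator (evN M N n) \<omega> * f \<omega>))"
      by simp
  qed
  also have "\<dots> = (\<Sum>n\<in>UNIV. h n * (\<integral>\<omega>. indicator (evN M N n) \<omega> * f \<omega> \<partial>M))"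
    using integrable_real_mult_indicator[OF sets_evN[OF N] f] by (simp add: mult.commute)
  finally show ?thesis .
qed

lemma (in finite_measure) integral_comp_eq_sum:
  fixes N :: "'a \<Rightarrow> 'n::finite"
  assumes N: "N \<in> M \<rightarrow>\<^sub>M count_space UNIV"
  shows "(\<integral>\<omega>. h (N \<omega>) \<partial>M) = (\<Sum>n\<in>UNIV. measure M (evN M N n) * h n)"
  using integral_mult_comp_eq_sum[of M "\<lambda>_. 1" N h, OF _ N] sets_evN[OF N]
  by (simp add: mult.commute)

lemma (in finite_measure) integral_mult_cmean_comp:
  fixes N :: "'a \<Rightarrow> 'n::finite"
  assumes f: "integrable M f" and N: "N \<in> M \<rightarrow>\<^sub>M count_space UNIV"
  shows "(\<integral>\<omega>. f \<omega> * h (N \<omega>) \<partial>M) = (\<integral>\<omega>. cmean M f (evN M N (N \<omega>)) * h (N \<omega>) \<partial>M)"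
proof -
  have "(\<integral>\<omega>. cmean M f (evN M N (N \<omega>)) * h (N \<omega>) \<partial>M)
      = (\<Sum>n\<in>UNIV. measure M (evN M N n) * cmean M f (evN M N n) * h n)"
    using integral_comp_eq_sum[OF N, of "\<lambda>n. cmean M f (evN M N n) * h n"] by (simp add: mult.assoc)
  also have "\<dots> = (\<Sum>n\<in>UNIV. h n * (\<integral>\<omega>. indicator (evN M N n) \<omega> * f \<omega> \<partial>M))"
    using measure_mult_cmean[OF sets_evN[OF N] f] by (simp add: mult.commute)
  finally show ?thesis
    using integral_mult_comp_eq_sum[OF f N] by simp
qed

lemma (in finite_measure) cmean_unit_interval:
  assumes A: "A \<in> sets M" and f: "integrable M f" and f01: "\<forall>\<omega>\<in>space M. 0 \<le> f \<omega> \<and> f \<omega> \<le> 1"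
  shows "0 \<le> cmean M f A \<and> cmean M f A \<le> 1"
proof -
  have "0 \<le> (\<integral>\<omega>. indicator A \<omega> * f \<omega> \<partial>M)"
    using f01 by (intro Bochner_Integration.integral_nonneg) (auto simp: indicator_def)
  moreover have "(\<integral>\<omega>. indicator A \<omega> * f \<omega> \<partial>M) \<le> (\<integral>\<omega>. indicator A \<omega> * 1 \<partial>M)"
    using f01 integrable_real_mult_indicator[OF A f] integrable_real_mult_indicator[OF A, of "\<lambda>_. 1"]
    by (intro integral_mono) (auto simp: indicator_def mult.commute)
  ultimately show ?thesis
    using A measure_nonneg[of M A] by (simp add: cmean_def divide_le_eq_1 less_le)
qed

lemma (in prob_space) var_nonneg: "0 \<le> var M f"
  unfolding var_def by (rule variance_positive)

text \<open>For binary \<open>X\<close> this is \<open>E[Var(X | N)]\<close>.\<close>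
definition within_variance :: "'a measure \<Rightarrow> ('a \<Rightarrow> real) \<Rightarrow> ('a \<Rightarrow> 'n) \<Rightarrow> real" where
  "within_variance M X N = (\<integral>\<omega>. XN M X N \<omega> * (1 - XN M X N \<omega>) \<partial>M)"

locale neighbourhood_model = prob_space M for M :: "'a measure" +
  fixes X Y :: "'a \<Rightarrow> real" and N :: "'a \<Rightarrow> 'n::finite"
  assumes X_measurable [measurable]: "X \<in> borel_measurable M"
    and X_binary: "\<forall>\<omega>\<in>space M. X \<omega> \<in> {0, 1}"
    and Y_integrable: "integrable M Y"
    and N_measurable [measurable]: "N \<in> M \<rightarrow>\<^sub>M count_space UNIV"
    and mixed_neighbourhood:
      "\<exists>n. measure M (evN M N n) > 0 \<and> 0 < cmean M X (evN M N n) \<and> cmean M X (evN M N n) < 1"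
begin

lemma X_unit_interval: "\<forall>\<omega>\<in>space M. 0 \<le> X \<omega> \<and> X \<omega> \<le> 1"
  using X_binary by auto

lemma X_integrable: "integrable M X"
  using X_unit_interval by (intro integrable_const_bound[where B=1]) auto

lemma XN_measurable [measurable]: "XN M X N \<in> borel_measurable M"
  unfolding XN_def by measurable

lemma XN_unit_interval: "\<forall>\<omega>\<in>space M. 0 \<le> XN M X N \<omega> \<and> XN M X N \<omega> \<le> 1"
  unfolding XN_def using cmean_unit_interval[OF sets_evN[OF N_measurable] X_integrable X_unit_interval] by blast

lemma integrable_mult_X: "integrable M f \<Longrightarrow> integrable M (\<lambda>\<omega>. f \<omega> * X \<omega>)"
  using X_unit_interval by (intro integrable_mult_bounded[where B=1]) auto

lemma integrable_mult_XN: "integrable M f \<Longrightarrow> integrable M (\<lambda>\<omega>. f \<omega> * XN M X N \<omega>)"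
  using XN_unit_interval by (intro integrable_mult_bounded[where B=1]) auto

lemma XN_integrable: "integrable M (XN M X N)"
  using integrable_mult_XN[of "\<lambda>_. 1"] by simp

lemma expectation_XN: "expectation (XN M X N) = expectation X"
  using integral_mult_cmean_comp[OF X_integrable N_measurable, of "\<lambda>_. 1"]
  by (simp add: XN_def[abs_def])

lemma expectation_XN_squared:
  "expectation (\<lambda>\<omega>. (XN M X N \<omega>)\<^sup>2) = expectation (\<lambda>\<omega>. X \<omega> * XN M X N \<omega>)"
  using integral_mult_cmean_comp[OF X_integrable N_measurable, of "\<lambda>n. cmean M X (evN M N n)"]
  by (simp add: XN_def power2_eq_square)

lemma var_X: "var M X = expectation X - (expectation X)\<^sup>2"
proof -
  have "expectation (\<lambda>\<omega>. (X \<omega>)\<^sup>2) = expectation X"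
    using X_binary by (intro Bochner_Integration.integral_cong) auto
  then show ?thesis
    using variance_eq[OF X_integrable] integrable_mult_X[OF X_integrable]
    by (simp add: var_def power2_eq_square)
qed

lemma var_XN: "var M (XN M X N) = expectation (\<lambda>\<omega>. X \<omega> * XN M X N \<omega>) - (expectation X)\<^sup>2"
proof -
  have "integrable M (\<lambda>\<omega>. (XN M X N \<omega>)\<^sup>2)"
    using integrable_mult_XN[OF XN_integrable] by (simp add: power2_eq_square)
  then show ?thesis
    using variance_eq[OF XN_integrable] by (simp add: var_def expectation_XN expectation_XN_squared)
qed

lemma within_variance_eq:
  "within_variance M X N = expectation X - expectation (\<lambda>\<omega>. X \<omega> * XN M X N \<omega>)"
proof -
  have "within_variance M X N = expectation (XN M X N) - expectation (\<lambda>\<omega>. (XN M X N \<omega>)\<^sup>2)"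
    unfolding within_variance_def using XN_integrable integrable_mult_XN[OF XN_integrable]
    by (simp add: right_diff_distrib power2_eq_square)
  then show ?thesis
    by (simp add: expectation_XN expectation_XN_squared)
qed

lemma law_of_total_variance: "var M X = var M (XN M X N) + within_variance M X N"
  by (simp add: var_X var_XN within_variance_eq)

lemma within_variance_pos: "within_variance M X N > 0"
proof -
  obtain n0 where n0: "measure M (evN M N n0) > 0" "0 < cmean M X (evN M N n0)" "cmean M X (evN M N n0) < 1"
    using mixed_neighbourhood by blast
  have c01: "0 \<le> cmean M X (evN M N n) \<and> cmean M X (evN M N n) \<le> 1" for n
    using cmean_unit_interval[OF sets_evN[OF N_measurable] X_integrable X_unit_interval] .
  have "within_variance M X N
      = (\<Sum>n\<in>UNIV. measure M (evN M N n) * (cmean M X (evN M N n) * (1 - cmean M X (evN M N n))))"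
    unfolding within_variance_def XN_def by (rule integral_comp_eq_sum[OF N_measurable])
  also have "\<dots> > 0"
    using n0 c01 by (intro sum_pos2[where i=n0]) auto
  finally show ?thesis .
qed


lemma var_X_pos: "var M X > 0"
  using law_of_total_variance within_variance_pos var_nonneg[of "XN M X N"] by linarith

lemma expectation_X_strict_unit_interval: "0 < expectation X \<and> expectation X < 1"
proof -
  have "0 \<le> expectation X"
    using X_unit_interval by (intro Bochner_Integration.integral_nonneg) auto
  moreover have "expectation X * (1 - expectation X) > 0"
    using var_X_pos var_X by (simp add: power2_eq_square algebra_simps)
  ultimately show ?thesis
    by (simp add: zero_less_mult_iff)
qed

lemma integral_indicator_evX1:
  "integrable M f \<Longrightarrow> (\<integral>\<omega>. indicator (evX M X 1) \<omega> * f \<omega> \<partial>M) = expectation (\<lambda>\<omega>. X \<omega> * f \<omega>)"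
  using X_binary by (intro Bochner_Integration.integral_cong) (auto simp: evX_def)

lemma integral_indicator_evX0:
  assumes "integrable M f"
  shows "(\<integral>\<omega>. indicator (evX M X 0) \<omega> * f \<omega> \<partial>M) = expectation f - expectation (\<lambda>\<omega>. X \<omega> * f \<omega>)"
proof -
  have "(\<integral>\<omega>. indicator (evX M X 0) \<omega> * f \<omega> \<partial>M) = expectation (\<lambda>\<omega>. f \<omega> - X \<omega> * f \<omega>)"
    using X_binary by (intro Bochner_Integration.integral_cong) (auto simp: evX_def)
  then show ?thesis
    using assms integrable_mult_X[OF assms] by (simp add: mult.commute)
qed

lemma measure_evX1: "measure M (evX M X 1) = expectation X"
  using integral_indicator_evX1[of "\<lambda>_. 1"] sets_evX[OF X_measurable] by simp

lemma measure_evX0: "measure M (evX M X 0) = 1 - expectation X"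
  using integral_indicator_evX0[of "\<lambda>_. 1"] sets_evX[OF X_measurable] by (simp add: prob_space)


lemma deltaB_eq:
  "deltaB M X Y N = expectation (\<lambda>\<omega>. X \<omega> * Y \<omega>) - expectation (\<lambda>\<omega>. Y \<omega> * XN M X N \<omega>)"
proof -
  have YX: "integrable M (\<lambda>\<omega>. Y \<omega> * X \<omega>)"
    using integrable_mult_X[OF Y_integrable] .
  have "deltaB M X Y N = (\<Sum>n\<in>UNIV. (\<integral>\<omega>. indicator (evN M N n) \<omega> * (Y \<omega> * X \<omega>) \<partial>M))
      - (\<Sum>n\<in>UNIV. cmean M X (evN M N n) * (\<integral>\<omega>. indicator (evN M N n) \<omega> * Y \<omega> \<partial>M))"
    unfolding deltaB_def sum_subtractf[symmetric]
    using measure_mult_cmean_cov[OF sets_evN[OF N_measurable] Y_integrable YX]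
    by (intro sum.cong) (simp_all add: cmean_def[of M X])
  also have "\<dots> = expectation (\<lambda>\<omega>. Y \<omega> * X \<omega>) - expectation (\<lambda>\<omega>. Y \<omega> * XN M X N \<omega>)"
    using integral_mult_comp_eq_sum[OF YX N_measurable, of "\<lambda>_. 1"]
      integral_mult_comp_eq_sum[OF Y_integrable N_measurable, of "\<lambda>n. cmean M X (evN M N n)"]
    by (simp add: XN_def)
  finally show ?thesis
    by (simp add: mult.commute)
qed


lemma deltaW_eq:
  "deltaW M X Y N = expectation (\<lambda>\<omega>. Y \<omega> * XN M X N \<omega>)
    - expectation (\<lambda>\<omega>. X \<omega> * Y \<omega>) * expectation (\<lambda>\<omega>. X \<omega> * XN M X N \<omega>) / expectation X
    - (expectation Y - expectation (\<lambda>\<omega>. X \<omega> * Y \<omega>))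
      * (expectation X - expectation (\<lambda>\<omega>. X \<omega> * XN M X N \<omega>)) / (1 - expectation X)"
proof -
  have YXN: "integrable M (\<lambda>\<omega>. Y \<omega> * XN M X N \<omega>)"
    using integrable_mult_XN[OF Y_integrable] .
  note cov = measure_mult_cmean_cov[OF sets_evX[OF X_measurable] Y_integrable YXN]
  have X1: "measure M (evX M X 1) * (cmean M (\<lambda>\<omega>. Y \<omega> * XN M X N \<omega>) (evX M X 1)
      - cmean M Y (evX M X 1) * cmean M (XN M X N) (evX M X 1))
    = expectation (\<lambda>\<omega>. X \<omega> * (Y \<omega> * XN M X N \<omega>))
      - expectation (\<lambda>\<omega>. X \<omega> * Y \<omega>) * expectation (\<lambda>\<omega>. X \<omega> * XN M X N \<omega>) / expectation X"
    using cov[of 1] by (simp add: integral_indicator_evX1 YXN Y_integrable XN_integrable measure_evX1)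
  have X0: "measure M (evX M X 0) * (cmean M (\<lambda>\<omega>. Y \<omega> * XN M X N \<omega>) (evX M X 0)
      - cmean M Y (evX M X 0) * cmean M (XN M X N) (evX M X 0))
    = expectation (\<lambda>\<omega>. Y \<omega> * XN M X N \<omega>) - expectation (\<lambda>\<omega>. X \<omega> * (Y \<omega> * XN M X N \<omega>))
      - (expectation Y - expectation (\<lambda>\<omega>. X \<omega> * Y \<omega>))
        * (expectation X - expectation (\<lambda>\<omega>. X \<omega> * XN M X N \<omega>)) / (1 - expectation X)"
    using cov[of 0]
    by (simp add: integral_indicator_evX0 YXN Y_integrable XN_integrable measure_evX0 expectation_XN)
  show ?thesis
    unfolding deltaW_def using X0 X1 by simp
qed

lemma Dgap_eq:
  "Dgap M X Y = expectation (\<lambda>\<omega>. X \<omega> * Y \<omega>) / expectation X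
    - (expectation Y - expectation (\<lambda>\<omega>. X \<omega> * Y \<omega>)) / (1 - expectation X)"
  by (simp add: Dgap_def cmean_def integral_indicator_evX1 integral_indicator_evX0 Y_integrable measure_evX1 measure_evX0)

lemma deltaB_plus_deltaW: "deltaB M X Y N + deltaW M X Y N = within_variance M X N * Dgap M X Y"
proof -
  have "expectation X \<noteq> 0" "1 - expectation X \<noteq> 0"
    using expectation_X_strict_unit_interval by auto
  then show ?thesis
    unfolding deltaB_eq deltaW_eq Dgap_eq within_variance_eq
    by (simp add: field_simps)
qed

lemma gammaAgg_unit_interval: "0 \<le> gammaAgg M X N \<and> gammaAgg M X N < 1"
  using law_of_total_variance within_variance_pos var_X_pos var_nonneg[of "XN M X N"]
  unfolding gammaAgg_def by (simp add: divide_less_eq_1)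

lemma one_minus_gammaAgg_mult_var: "(1 - gammaAgg M X N) * var M X = within_variance M X N"
  using law_of_total_variance var_X_pos unfolding gammaAgg_def by (simp add: field_simps)

end

theorem proposition1:
  fixes M :: "'a measure" and X Y :: "'a \<Rightarrow> real" and N :: "'a \<Rightarrow> 'n::finite"
    and Ylo Yhi :: real
  assumes "prob_space M"
    and "X \<in> borel_measurable M"
    and "\<forall>\<omega>\<in>space M. X \<omega> \<in> {0, 1}"
    and "integrable M Y"
    and "N \<in> M \<rightarrow>\<^sub>M count_space UNIV"
    and "\<exists>n. measure M (evN M N n) > 0 \<and> 0 < cmean M X (evN M N n) \<and> cmean M X (evN M N n) < 1"
    and "Ylo \<le> Yhi"
    and "\<forall>x\<in>{0,1}. \<forall>n. measure M (evX M X x \<inter> evN M N n) > 0 \<longrightarrow>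
            cmean M Y (evX M X x \<inter> evN M N n) \<in> {Ylo..Yhi}"
  shows "Dgap M X Y = (deltaB M X Y N + deltaW M X Y N) / ((1 - gammaAgg M X N) * var M X)
         \<and> 0 \<le> gammaAgg M X N \<and> gammaAgg M X N < 1
         \<and> sgn (Dgap M X Y) = sgn (deltaB M X Y N + deltaW M X Y N)"
proof -
  interpret neighbourhood_model M X Y N
    using assms(1-6) by (simp add: neighbourhood_model_def neighbourhood_model_axioms_def)
  show ?thesis
    using deltaB_plus_deltaW one_minus_gammaAgg_mult_var gammaAgg_unit_interval within_variance_pos
    by (simp add: sgn_mult)
qed

end
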